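(* Let $\mathcal{I}$ be an interval hypergraph on $[n]$ closed under intersection. Then the map $(i,j)\mapsto A_{ij}$ is a bijection from $\mathcal{IJ}_{\mathcal{I}}$ to the set of join irreducible elements of the lattice $P_{\mathcal{I}}$.
   Context: An interval hypergraph $\mathcal{I}$ on $[n]$ is a collection of intervals of $[n]$ containing all singletons; it is closed under intersection if $I,J\in\mathcal{I}$, $I\cap J\ne\varnothing$ imply $I\cap J\in\mathcal{I}$. An orientation is a map $O:\mathcal{I}\to[n]$ with $O(I)\in I$; it is acyclic if there are no $H_1,\dots,H_k$, $k\ge2$, with $O(H_{i+1})\in H_i\setminus\{O(H_i)\}$ for $i\in[k-1]$ and $O(H_1)\in H_k\setminus\{O(H_k)\}$. Orientations $O\ne O'$ are related by an increasing flip (from $O$ to $O'$) if there exist $1\le i<j\le n$ such that for all $H$: if $O(H)\ne O'(H)$ then $O(H)=i$, $O'(H)=j$; and if $\{i,j\}\subseteq H$ then $O(H)=i\iff O'(H)=j$. $P_{\mathcal{I}}$ is the transitive closure of the increasing flip relation on acyclic orientations (a lattice here). For $1\le i<j\le n$ such that some $I\in\mathcal{I}$ contains $\{i,j\}$, let $J_{ij}=\bigcap\{I\in\mathcal{I}:\{i,j\}\subseteq I\}$ and $\mu_{ij}=\min J_{ij}$. Let $\mathcal{IJ}_{\mathcal{I}}$ be the set of such pairs $(i,j)$ satisfying \[ i=\max\Big([\mu_{ij},j[\ \setminus\bigcup_{J\in\mathcal{I},\ J\subseteq[\mu_{ij},j[}\big(J\setminus\{\min J\}\big)\Big). \] For $(i,j)\in\mathcal{IJ}_{\mathcal{I}}$,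 $A_{ij}$ is the orientation with $A_{ij}(J)=j$ if $j\in J$ and $\min J\ge\mu_{ij}$, and $A_{ij}(J)=\min J$ otherwise (equivalently $A_{ij}=\mathrm{Or}_\pi$ for $\pi=1\cdots(\mu_{ij}-1)\,j\,\mu_{ij}\cdots(j-1)\,(j+1)\cdots n$, where $\mathrm{Or}_\pi(I)=\pi(\min\{k:\pi(k)\in I\})$). An element of a lattice is join irreducible if it is not the minimum and covers exactly one element. *)

theory Defs
  imports Main
begin

definition interval_hypergraph :: "nat \<Rightarrow> nat set set \<Rightarrow> bool" where
  "interval_hypergraph n \<I> \<longleftrightarrow>
     (\<forall>I\<in>\<I>. \<exists>a b. 1 \<le> a \<and> a \<le> b \<and> b \<le> n \<and> I = {a..b}) \<and>
     (\<forall>i\<in>{1..n}. {i} \<in> \<I>)"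

definition closed_under_intersection :: "nat set set \<Rightarrow> bool" where
  "closed_under_intersection \<I> \<longleftrightarrow>
     (\<forall>I\<in>\<I>. \<forall>J\<in>\<I>. I \<inter> J \<noteq> {} \<longrightarrow> I \<inter> J \<in> \<I>)"

text \<open>Orientations O : \<I> \<rightarrow> [n] with Or(I) \<in> I, represented extensionally:
  Or is 0 outside \<I> (0 is not an element of [n]).\<close>

definition orientations :: "nat set set \<Rightarrow> (nat set \<Rightarrow> nat) set" where
  "orientations \<I> = {Or. (\<forall>H\<in>\<I>. Or H \<in> H) \<and> (\<forall>H. H \<notin> \<I> \<longrightarrow> Or H = 0)}"

definition acyclic_orientation :: "nat set set \<Rightarrow> (nat set \<Rightarrow> nat) \<Rightarrow> bool" where
  "acyclic_orientation \<I> Or \<longleftrightarrow>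
     \<not> (\<exists>k::nat. \<exists>Hs::nat \<Rightarrow> nat set. k \<ge> 2 \<and> (\<forall>i<k. Hs i \<in> \<I>) \<and>
          (\<forall>i. i + 1 < k \<longrightarrow> Or (Hs (i + 1)) \<in> Hs i - {Or (Hs i)}) \<and>
          Or (Hs 0) \<in> Hs (k - 1) - {Or (Hs (k - 1))})"

definition acyclic_orientations :: "nat set set \<Rightarrow> (nat set \<Rightarrow> nat) set" where
  "acyclic_orientations \<I> = {Or \<in> orientations \<I>. acyclic_orientation \<I> Or}"

definition increasing_flip ::
  "nat \<Rightarrow> nat set set \<Rightarrow> (nat set \<Rightarrow> nat) \<Rightarrow> (nat set \<Rightarrow> nat) \<Rightarrow> bool" where
  "increasing_flip n \<I> Or Or' \<longleftrightarrow> Or \<noteq> Or' \<and>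
     (\<exists>i j. 1 \<le> i \<and> i < j \<and> j \<le> n \<and>
        (\<forall>H\<in>\<I>. (Or H \<noteq> Or' H \<longrightarrow> Or H = i \<and> Or' H = j) \<and>
                 ({i, j} \<subseteq> H \<longrightarrow> (Or H = i \<longleftrightarrow> Or' H = j))))"

definition P_le :: "nat \<Rightarrow> nat set set \<Rightarrow> (nat set \<Rightarrow> nat) \<Rightarrow> (nat set \<Rightarrow> nat) \<Rightarrow> bool" where
  "P_le n \<I> = (\<lambda>Or Or'. Or \<in> acyclic_orientations \<I> \<and> Or' \<in> acyclic_orientations \<I> \<and>
                       increasing_flip n \<I> Or Or')\<^sup>*\<^sup>*"

definition P_covers :: "nat \<Rightarrow> nat set set \<Rightarrow> (nat set \<Rightarrow> nat) \<Rightarrow> (nat set \<Rightarrow> nat) \<Rightarrow> bool" where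
  "P_covers n \<I> y x \<longleftrightarrow>  \<comment> \<open>y covers x\<close>
     x \<in> acyclic_orientations \<I> \<and> y \<in> acyclic_orientations \<I> \<and>
     P_le n \<I> x y \<and> x \<noteq> y \<and>
     \<not> (\<exists>z\<in>acyclic_orientations \<I>. P_le n \<I> x z \<and> P_le n \<I> z y \<and> z \<noteq> x \<and> z \<noteq> y)"

definition P_join_irreducible :: "nat \<Rightarrow> nat set set \<Rightarrow> (nat set \<Rightarrow> nat) \<Rightarrow> bool" where
  "P_join_irreducible n \<I> x \<longleftrightarrow>
     x \<in> acyclic_orientations \<I> \<and>
     \<not> (\<forall>y\<in>acyclic_orientations \<I>. P_le n \<I> x y) \<and>
     (\<exists>!y. P_covers n \<I> x y)"

definition J_set :: "nat set set \<Rightarrow> nat \<Rightarrow> nat \<Rightarrow> nat set" where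
  "J_set \<I> i j = \<Inter>{I \<in> \<I>. {i, j} \<subseteq> I}"

definition mu :: "nat set set \<Rightarrow> nat \<Rightarrow> nat \<Rightarrow> nat" where
  "mu \<I> i j = Min (J_set \<I> i j)"

definition IJ :: "nat \<Rightarrow> nat set set \<Rightarrow> (nat \<times> nat) set" where
  "IJ n \<I> = {(i, j). 1 \<le> i \<and> i < j \<and> j \<le> n \<and> (\<exists>I\<in>\<I>. {i, j} \<subseteq> I) \<and>
     i = Max ({mu \<I> i j..<j} -
              \<Union>{J - {Min J} | J. J \<in> \<I> \<and> J \<subseteq> {mu \<I> i j..<j}})}"

definition A_orient :: "nat set set \<Rightarrow> nat \<Rightarrow> nat \<Rightarrow> (nat set \<Rightarrow> nat)" where
  "A_orient \<I> i j = (\<lambda>J. if J \<in> \<I> then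
       (if j \<in> J \<and> Min J \<ge> mu \<I> i j then j else Min J) else 0)"

end

theory Submission
  imports Defs
begin

text \<open>
  Orient each hyperedge H from O(H) to its other elements: O is acyclic iff the resulting
  relation of arcs is. If O(H) = j is not the minimum of H, pick an out-neighbour i < j of j
  that is minimal for the arc order and redirect towards i every hyperedge that points to j
  and contains i. This gives an acyclic orientation below O, changed only where O takes the
  value j, and hence a cover of O with the same property. A join irreducible O has a unique
  cover, so all its non-minimal values are one and the same j, and acyclicity then forces
  O = lift m j, the orientation of the permutation moving j in front of m, where m is the
  least minimum of a hyperedge pointing to j.

  Conversely, the covers of lift m j are exactly its redirections towards the bottom points
  i of [m, j), i.e. the points that are the minimum of every hyperedge inside [m, j)
  containing them. The redirection towards the largest bottom point i_max is always a cover,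
  and it is the only one iff no hyperedge containing j has its minimum in ]m, i_max]. For
  (i, j) in IJ this is exactly the situation m = mu i j and i = i_max.
\<close>

section \<open>Arcs of an orientation\<close>

definition arcs :: "nat set set \<Rightarrow> (nat set \<Rightarrow> nat) \<Rightarrow> nat rel" where
  "arcs \<I> Or = {(Or H, b) | H b. H \<in> \<I> \<and> b \<in> H \<and> b \<noteq> Or H}"

lemma arcsI: "H \<in> \<I> \<Longrightarrow> b \<in> H \<Longrightarrow> b \<noteq> Or H \<Longrightarrow> (Or H, b) \<in> arcs \<I> Or"
  unfolding arcs_def by blast

lemma arcsE:
  assumes "(a, b) \<in> arcs \<I> Or"
  obtains H where "H \<in> \<I>" "Or H = a" "b \<in> H" "b \<noteq> a"
  using assms unfolding arcs_def by blast

lemma acyclic_orientation_if_acyclic_arcs: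
  assumes "acyclic (arcs \<I> Or)"
  shows "acyclic_orientation \<I> Or"
  unfolding acyclic_orientation_def
proof (intro notI, elim exE conjE)
  fix k and Hs :: "nat \<Rightarrow> nat set"
  assume k: "2 \<le> k" and Hs: "\<forall>i<k. Hs i \<in> \<I>"
    and step: "\<forall>i. i + 1 < k \<longrightarrow> Or (Hs (i + 1)) \<in> Hs i - {Or (Hs i)}"
    and close: "Or (Hs 0) \<in> Hs (k - 1) - {Or (Hs (k - 1))}"
  define f where "f t = Or (Hs (t mod k))" for t
  have "(f t, f (Suc t)) \<in> arcs \<I> Or" if "t < k" for t
  proof (cases "Suc t < k")
    case True
    then have "f t = Or (Hs t)" "f (Suc t) = Or (Hs (t + 1))"
      using that unfolding f_def by simp_all
    then show ?thesis using step Hs True that by (simp add: arcsI)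
  next
    case False
    then have "Suc t = k" using that by simp
    then have "f t = Or (Hs (k - 1))" "f (Suc t) = Or (Hs 0)"
      using that unfolding f_def by auto
    then show ?thesis using close Hs k by (simp add: arcsI)
  qed
  then have "(f 0, f k) \<in> arcs \<I> Or ^^ k"
    by (auto simp: relpow_fun_conv)
  moreover have "f k = f 0" unfolding f_def by simp
  ultimately have "(f 0, f 0) \<in> (arcs \<I> Or)\<^sup>+"
    unfolding trancl_power using k by (intro exI[of _ k]) auto
  with assms show False
    unfolding acyclic_def by blast
qed

lemma acyclic_arcs_if_acyclic_orientation:
  assumes no_cycle: "acyclic_orientation \<I> Or"
  shows "acyclic (arcs \<I> Or)"
  unfolding acyclic_def
proof (intro allI notI)
  fix v assume "(v, v) \<in> (arcs \<I> Or)\<^sup>+"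
  then obtain k f where k: "0 < k" and f: "f 0 = v" "f k = v"
    and "\<forall>t<k. (f t, f (Suc t)) \<in> arcs \<I> Or"
    unfolding trancl_power relpow_fun_conv by blast
  then have "\<forall>t<k. \<exists>H. H \<in> \<I> \<and> f t = Or H \<and> f (Suc t) \<in> H \<and> f (Suc t) \<noteq> Or H"
    unfolding arcs_def by blast
  then obtain Hs where Hs: "\<And>t. t < k \<Longrightarrow>
      Hs t \<in> \<I> \<and> f t = Or (Hs t) \<and> f (Suc t) \<in> Hs t \<and> f (Suc t) \<noteq> Or (Hs t)"
    by metis
  have "k \<noteq> 1" using Hs[of 0] f by auto
  with k have "2 \<le> k" by simp
  moreover have "Or (Hs (t + 1)) \<in> Hs t - {Or (Hs t)}" if "t + 1 < k" for t
    using Hs[of t] Hs[of "t + 1"] that by auto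
  moreover have "Or (Hs 0) \<in> Hs (k - 1) - {Or (Hs (k - 1))}"
    using Hs[of 0] Hs[of "k - 1"] k f by auto
  ultimately show False
    using no_cycle Hs unfolding acyclic_orientation_def by blast
qed

lemma acyclic_orientation_iff_acyclic_arcs:
  "acyclic_orientation \<I> Or \<longleftrightarrow> acyclic (arcs \<I> Or)"
  using acyclic_orientation_if_acyclic_arcs acyclic_arcs_if_acyclic_orientation by blast

lemma rank_increases_along_arcs:
  fixes r :: "nat \<Rightarrow> nat"
  assumes rank: "\<And>H b. H \<in> \<I> \<Longrightarrow> b \<in> H \<Longrightarrow> b \<noteq> Or H \<Longrightarrow> r (Or H) < r b"
    and path: "(a, b) \<in> (arcs \<I> Or)\<^sup>+"
  shows "r a < r b"
  using path
proof (induction rule: trancl_induct)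
  case (base b)
  then show ?case using rank unfolding arcs_def by blast
next
  case (step b c)
  then have "r b < r c" using rank unfolding arcs_def by blast
  with step.IH show ?case by simp
qed

lemma acyclic_orientation_if_rank:
  fixes r :: "nat \<Rightarrow> nat"
  assumes "\<And>H b. H \<in> \<I> \<Longrightarrow> b \<in> H \<Longrightarrow> b \<noteq> Or H \<Longrightarrow> r (Or H) < r b"
  shows "acyclic_orientation \<I> Or"
  unfolding acyclic_orientation_iff_acyclic_arcs acyclic_def
  using rank_increases_along_arcs[of \<I> Or r, OF assms] by (meson less_irrefl)

lemma acyclic_orientation_no_2_cycle:
  assumes "acyclic_orientation \<I> Or" "A \<in> \<I>" "B \<in> \<I>"
    and "Or B \<in> A" "Or A \<in> B" "Or A \<noteq> Or B"
  shows False
proof -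
  have "(Or A, Or B) \<in> arcs \<I> Or" "(Or B, Or A) \<in> arcs \<I> Or"
    using assms(2-6) unfolding arcs_def by force+
  then have "(Or A, Or A) \<in> (arcs \<I> Or)\<^sup>+"
    by (meson r_into_trancl trancl_into_trancl)
  then show False
    using assms(1) by (simp add: acyclic_orientation_iff_acyclic_arcs acyclic_def)
qed

section \<open>The order on acyclic orientations\<close>

lemma orientations_eqI:
  assumes "a \<in> orientations \<I>" "b \<in> orientations \<I>" "\<And>H. H \<in> \<I> \<Longrightarrow> a H = b H"
  shows "a = b"
proof
  fix H show "a H = b H"
    using assms unfolding orientations_def by (cases "H \<in> \<I>") auto
qed

lemma orientation_in_hyperedge: "x \<in> orientations \<I> \<Longrightarrow> H \<in> \<I> \<Longrightarrow> x H \<in> H"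
  unfolding orientations_def by blast

lemma mem_acyclic_orientations_iff:
  "x \<in> acyclic_orientations \<I> \<longleftrightarrow> x \<in> orientations \<I> \<and> acyclic (arcs \<I> x)"
  by (simp add: acyclic_orientations_def acyclic_orientation_iff_acyclic_arcs)

lemma increasing_flip_le:
  assumes "a \<in> orientations \<I>" "b \<in> orientations \<I>" "increasing_flip n \<I> a b"
  shows "a H \<le> b H"
proof (cases "H \<in> \<I>")
  case True
  from assms(3) obtain i j where "i < j"
    and "\<forall>H\<in>\<I>. a H \<noteq> b H \<longrightarrow> a H = i \<and> b H = j"
    unfolding increasing_flip_def by blast
  with True show ?thesis by (cases "a H = b H") auto
next
  case False
  with assms(1,2) show ?thesis
    unfolding orientations_def by simp
qed

lemma P_le_pointwise: "P_le n \<I> a b \<Longrightarrow> a H \<le> b H"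
  unfolding P_le_def
proof (induction rule: rtranclp_induct)
  case (step y z)
  then show ?case
    using increasing_flip_le[of y \<I> z n H] by (simp add: acyclic_orientations_def)
qed simp

lemma P_le_antisym:
  assumes "P_le n \<I> a b" "P_le n \<I> b a"
  shows "a = b"
proof
  fix H show "a H = b H"
    using P_le_pointwise[OF assms(1)] P_le_pointwise[OF assms(2)] by (rule antisym)
qed

lemma P_le_flip:
  "a \<in> acyclic_orientations \<I> \<Longrightarrow> b \<in> acyclic_orientations \<I> \<Longrightarrow>
    increasing_flip n \<I> a b \<Longrightarrow> P_le n \<I> a b"
  unfolding P_le_def by (simp add: r_into_rtranclp)

lemma P_le_trans: "P_le n \<I> a b \<Longrightarrow> P_le n \<I> b c \<Longrightarrow> P_le n \<I> a c"
  unfolding P_le_def by simp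

lemma P_le_neq_acyclic:
  assumes "P_le n \<I> a b" "a \<noteq> b"
  shows "a \<in> acyclic_orientations \<I>" "b \<in> acyclic_orientations \<I>"
  using assms unfolding P_le_def
  by (auto elim: converse_rtranclpE rtranclp.cases)

lemma P_le_last_flip:
  assumes "P_le n \<I> a b" "a \<noteq> b"
  obtains w where "w \<in> acyclic_orientations \<I>" "P_le n \<I> a w" "increasing_flip n \<I> w b"
  using assms unfolding P_le_def by (cases rule: rtranclp.cases) auto

lemma P_le_sum_less:
  assumes "finite \<I>" "P_le n \<I> a b" "a \<noteq> b"
  shows "(\<Sum>H\<in>\<I>. a H) < (\<Sum>H\<in>\<I>. b H)"
proof -
  have "a \<in> orientations \<I>" "b \<in> orientations \<I>"
    using P_le_neq_acyclic[OF assms(2,3)] by (simp_all add: acyclic_orientations_def)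
  then obtain H where "H \<in> \<I>" "a H \<noteq> b H"
    using orientations_eqI assms(3) by blast
  then have "a H < b H"
    using P_le_pointwise[OF assms(2)] by (simp add: order.strict_iff_order)
  with \<open>H \<in> \<I>\<close> show ?thesis
    by (intro sum_strict_mono_ex1[OF assms(1)]) (auto intro: P_le_pointwise[OF assms(2)])
qed

lemma P_covers_flip:
  assumes "P_covers n \<I> b a"
  shows "a \<in> acyclic_orientations \<I>" "increasing_flip n \<I> a b"
proof -
  have a: "a \<in> acyclic_orientations \<I>" "b \<in> acyclic_orientations \<I>" "P_le n \<I> a b" "a \<noteq> b"
    and nothing_between:
      "\<not> (\<exists>z\<in>acyclic_orientations \<I>. P_le n \<I> a z \<and> P_le n \<I> z b \<and> z \<noteq> a \<and> z \<noteq> b)"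
    using assms unfolding P_covers_def by auto
  obtain w where w: "w \<in> acyclic_orientations \<I>" "P_le n \<I> a w" "increasing_flip n \<I> w b"
    using P_le_last_flip[OF a(3,4)] .
  have "w \<noteq> b" using w(3) unfolding increasing_flip_def by blast
  moreover have "P_le n \<I> w b" using P_le_flip w a by blast
  ultimately have "w = a" using nothing_between w by blast
  with w show "a \<in> acyclic_orientations \<I>" "increasing_flip n \<I> a b" by simp_all
qed

lemma P_covers_not_least:
  assumes "P_covers n \<I> b a"
  shows "\<not> (\<forall>y\<in>acyclic_orientations \<I>. P_le n \<I> b y)"
  using assms P_le_antisym unfolding P_covers_def by blast

lemma exists_cover_above:
  assumes "finite \<I>" "P_le n \<I> y x" "y \<noteq> x"
  obtains c where "P_covers n \<I> x c" "P_le n \<I> y c"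
proof -
  define Z where "Z = {z \<in> acyclic_orientations \<I>. P_le n \<I> y z \<and> P_le n \<I> z x \<and> z \<noteq> x}"
  let ?weight = "\<lambda>z. \<Sum>H\<in>\<I>. z H"
  have "P_le n \<I> y y" unfolding P_le_def by simp
  then have "y \<in> Z"
    unfolding Z_def using assms(2,3) P_le_neq_acyclic(1) by blast
  moreover have "?weight z < ?weight x" if "z \<in> Z" for z
    using that P_le_sum_less[OF assms(1)] unfolding Z_def by blast
  ultimately obtain c where c: "c \<in> Z" and c_max: "\<And>z. z \<in> Z \<Longrightarrow> ?weight z \<le> ?weight c"
    using ex_has_greatest_nat[of "\<lambda>z. z \<in> Z" y ?weight "?weight x"] by blast
  have "P_covers n \<I> x c"
    unfolding P_covers_def
  proof (intro conjI)
    show "c \<in> acyclic_orientations \<I>" "P_le n \<I> c x" "c \<noteq> x"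
      using c unfolding Z_def by auto
    show "x \<in> acyclic_orientations \<I>"
      using P_le_neq_acyclic(2)[OF assms(2,3)] .
    show "\<not> (\<exists>z\<in>acyclic_orientations \<I>. P_le n \<I> c z \<and> P_le n \<I> z x \<and> z \<noteq> c \<and> z \<noteq> x)"
    proof (intro notI, elim bexE conjE)
      fix z assume z: "z \<in> acyclic_orientations \<I>" "P_le n \<I> c z" "P_le n \<I> z x"
        "z \<noteq> c" "z \<noteq> x"
      then have "z \<in> Z" using c P_le_trans unfolding Z_def by blast
      then have "?weight z \<le> ?weight c" by (rule c_max)
      with P_le_sum_less[OF assms(1) z(2) z(4)[symmetric]] show False by simp
    qed
  qed
  moreover have "P_le n \<I> y c" using c unfolding Z_def by blast
  ultimately show ?thesis by (rule that)
qed

lemma increasing_flipI: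
  assumes "1 \<le> i" "i < j" "j \<le> n" "a \<noteq> b"
    and "\<And>H. H \<in> \<I> \<Longrightarrow> a H \<noteq> b H \<Longrightarrow> a H = i \<and> b H = j"
    and "\<And>H. H \<in> \<I> \<Longrightarrow> i \<in> H \<Longrightarrow> j \<in> H \<Longrightarrow> a H = i \<longleftrightarrow> b H = j"
  shows "increasing_flip n \<I> a b"
proof -
  have "\<forall>H\<in>\<I>. (a H \<noteq> b H \<longrightarrow> a H = i \<and> b H = j) \<and> ({i, j} \<subseteq> H \<longrightarrow> (a H = i \<longleftrightarrow> b H = j))"
    using assms(5,6) by simp
  then show ?thesis
    unfolding increasing_flip_def
    by (intro conjI[OF assms(4)] exI[of _ i] exI[of _ j]) (use assms(1-3) in simp)
qed

section \<open>Redirecting an orientation\<close>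

definition redirect :: "nat set set \<Rightarrow> (nat set \<Rightarrow> nat) \<Rightarrow> nat \<Rightarrow> nat \<Rightarrow> nat set \<Rightarrow> nat" where
  "redirect \<I> x j i = (\<lambda>H. if H \<in> \<I> \<and> x H = j \<and> i \<in> H then i else x H)"

lemma redirect_orientation:
  "x \<in> orientations \<I> \<Longrightarrow> redirect \<I> x j i \<in> orientations \<I>"
  unfolding orientations_def redirect_def by auto

lemma increasing_flip_redirect:
  assumes "(j, i) \<in> arcs \<I> x" "(i, j) \<notin> arcs \<I> x" "1 \<le> i" "i < j" "j \<le> n"
  shows "increasing_flip n \<I> (redirect \<I> x j i) x"
proof (rule increasing_flipI[OF assms(3-5)])
  obtain G where "G \<in> \<I>" "x G = j" "i \<in> G"
    using assms(1) unfolding arcs_def by blast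
  then have "redirect \<I> x j i G \<noteq> x G"
    using assms(4) unfolding redirect_def by simp
  then show "redirect \<I> x j i \<noteq> x" by auto
  fix H assume "H \<in> \<I>"
  show "redirect \<I> x j i H \<noteq> x H \<Longrightarrow> redirect \<I> x j i H = i \<and> x H = j"
    unfolding redirect_def by auto
  assume "i \<in> H" "j \<in> H"
  with \<open>H \<in> \<I>\<close> assms(2,4) have "x H \<noteq> i" unfolding arcs_def by blast
  with \<open>H \<in> \<I>\<close> \<open>i \<in> H\<close> show "redirect \<I> x j i H = i \<longleftrightarrow> x H = j"
    unfolding redirect_def by auto
qed

lemma arcs_redirect_subset:
  "arcs \<I> (redirect \<I> x j i) \<subseteq> (insert (i, j) (arcs \<I> x - {(j, i)}))\<^sup>+"
proof
  let ?r = "arcs \<I> x - {(j, i)}"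
  fix p assume "p \<in> arcs \<I> (redirect \<I> x j i)"
  then obtain H b where p: "p = (redirect \<I> x j i H, b)" and H: "H \<in> \<I>" "b \<in> H"
    and b: "b \<noteq> redirect \<I> x j i H"
    unfolding arcs_def by blast
  show "p \<in> (insert (i, j) ?r)\<^sup>+"
  proof (cases "x H = j \<and> i \<in> H")
    case True
    then have p_i: "p = (i, b)" using p H unfolding redirect_def by simp
    show ?thesis
    proof (cases "b = j")
      case False
      then have "(j, b) \<in> ?r"
        using True H b p_i p unfolding arcs_def by force
      then show ?thesis
        unfolding p_i by (meson insertI1 insertI2 r_into_trancl trancl_into_trancl2)
    qed (simp add: p_i r_into_trancl)
  next
    case False
    then have "p = (x H, b)" "(x H, b) \<in> ?r"
      using p H b unfolding redirect_def arcs_def by auto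
    then show ?thesis by auto
  qed
qed

text \<open>For m < j this is Or_pi for pi = 1 ... (m-1) j m ... (j-1) (j+1) ... n.\<close>

definition lift_orientation :: "nat set set \<Rightarrow> nat \<Rightarrow> nat \<Rightarrow> nat set \<Rightarrow> nat" where
  "lift_orientation \<I> m j =
     (\<lambda>H. if H \<in> \<I> then (if j \<in> H \<and> m \<le> Min H then j else Min H) else 0)"

locale interval_hg =
  fixes n :: nat and \<I> :: "nat set set"
  assumes interval_hypergraph: "interval_hypergraph n \<I>"
begin

lemma hyperedge_Min_Max:
  assumes "H \<in> \<I>"
  shows "H = {Min H..Max H}" "1 \<le> Min H" "Min H \<le> Max H" "Max H \<le> n"
proof -
  obtain a b where ab: "1 \<le> a" "a \<le> b" "b \<le> n" "H = {a..b}"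
    using interval_hypergraph assms unfolding interval_hypergraph_def by blast
  then have "Min H = a" "Max H = b" by (auto intro!: Min_eqI Max_eqI)
  with ab show "H = {Min H..Max H}" "1 \<le> Min H" "Min H \<le> Max H" "Max H \<le> n" by simp_all
qed

lemma mem_hyperedge_iff: "H \<in> \<I> \<Longrightarrow> c \<in> H \<longleftrightarrow> Min H \<le> c \<and> c \<le> Max H"
  by (metis hyperedge_Min_Max(1) atLeastAtMost_iff)

lemma Min_in_hyperedge: "H \<in> \<I> \<Longrightarrow> Min H \<in> H"
  using mem_hyperedge_iff hyperedge_Min_Max(3) by blast

lemma Min_hyperedge_le: "H \<in> \<I> \<Longrightarrow> c \<in> H \<Longrightarrow> Min H \<le> c"
  using mem_hyperedge_iff by blast

lemma hyperedge_range: "H \<in> \<I> \<Longrightarrow> c \<in> H \<Longrightarrow> 1 \<le> c \<and> c \<le> n"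
  using mem_hyperedge_iff hyperedge_Min_Max(2,4) by (meson order.trans)

lemma hyperedge_convex: "H \<in> \<I> \<Longrightarrow> a \<in> H \<Longrightarrow> b \<in> H \<Longrightarrow> a \<le> c \<Longrightarrow> c \<le> b \<Longrightarrow> c \<in> H"
  using mem_hyperedge_iff by (meson order.trans)

lemma hyperedge_below_if_Min_below:
  assumes "H \<in> \<I>" "j \<notin> H" "Min H < j" "c \<in> H"
  shows "c < j"
  using assms mem_hyperedge_iff[OF assms(1)] by (meson le_less_trans less_imp_le not_le)

lemma finite_hypergraph: "finite \<I>"
proof (rule finite_subset)
  show "\<I> \<subseteq> Pow {1..n}" using hyperedge_range by auto
qed simp

lemma finite_arcs:
  assumes "x \<in> orientations \<I>"
  shows "finite (arcs \<I> x)"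
proof (rule finite_subset)
  show "arcs \<I> x \<subseteq> {1..n} \<times> {1..n}"
    using assms hyperedge_range unfolding arcs_def orientations_def by fastforce
qed simp

text \<open>A path of arcs cannot jump over j: an arc from above j to below it lies in a
  hyperedge, which then also contains j.\<close>

lemma arcs_path_passes:
  assumes x: "x \<in> orientations \<I>" and path: "(w, v) \<in> (arcs \<I> x)\<^sup>*" and "j < w"
  shows "j < v \<or> (w, j) \<in> (arcs \<I> x)\<^sup>+"
  using path
proof (induction rule: rtrancl_induct)
  case (step u v)
  show ?case
  proof (cases "(w, j) \<in> (arcs \<I> x)\<^sup>+")
    case False
    with step.IH have "j < u" by simp
    obtain G where G: "G \<in> \<I>" "u = x G" "v \<in> G" "v \<noteq> x G"
      using step.hyps(2) unfolding arcs_def by blast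
    have "u \<in> G" using orientation_in_hyperedge[OF x G(1)] G(2) by simp
    consider "j < v" | "v = j" | "v < j" by linarith
    then show ?thesis
    proof cases
      case 2
      with step.hyps show ?thesis by (simp add: rtrancl_into_trancl1)
    next
      case 3
      then have "j \<in> G" using hyperedge_convex[OF G(1,3) \<open>u \<in> G\<close>] \<open>j < u\<close> by simp
      then have "(u, j) \<in> arcs \<I> x" using G \<open>j < u\<close> unfolding arcs_def by fastforce
      with step.hyps(1) show ?thesis by (simp add: rtrancl_into_trancl1)
    qed simp
  qed simp
qed (use assms in simp)

text \<open>Such a path would start with an arc j -> w: minimality of i excludes w < j, and
  arcs_path_passes excludes w > j.\<close>

lemma no_path_avoiding_arc:
  assumes x: "x \<in> orientations \<I>" and acyc: "acyclic (arcs \<I> x)" and "i < j"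
    and i_minimal: "\<And>w. w < j \<Longrightarrow> (j, w) \<in> arcs \<I> x \<Longrightarrow> (w, i) \<notin> (arcs \<I> x)\<^sup>+"
  shows "(j, i) \<notin> (arcs \<I> x - {(j, i)})\<^sup>+"
proof
  let ?r = "arcs \<I> x - {(j, i)}"
  have no_loop: "(v, v) \<notin> (arcs \<I> x)\<^sup>+" for v
    using acyc unfolding acyclic_def by blast
  assume "(j, i) \<in> ?r\<^sup>+"
  then obtain w where jw: "(j, w) \<in> ?r" and "(w, i) \<in> ?r\<^sup>*"
    by (blast dest: tranclD)
  moreover have "w \<noteq> i" using jw by blast
  ultimately have "(w, i) \<in> ?r\<^sup>+"
    by (simp add: rtrancl_eq_or_trancl)
  then have wi: "(w, i) \<in> (arcs \<I> x)\<^sup>+"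
    by (rule trancl_mono) blast
  have "w \<noteq> j" using jw no_loop[of j] r_into_trancl[of j j] by blast
  moreover have "\<not> j < w"
  proof
    assume "j < w"
    then have "(w, j) \<in> (arcs \<I> x)\<^sup>+"
      using arcs_path_passes[OF x trancl_into_rtrancl[OF wi] \<open>j < w\<close>] \<open>i < j\<close> by simp
    moreover have "(j, w) \<in> arcs \<I> x" using jw by blast
    ultimately show False using no_loop by (blast intro: trancl_into_trancl2)
  qed
  ultimately have "w < j" by simp
  with jw wi show False using i_minimal by blast
qed

lemma acyclic_arcs_redirect:
  assumes x: "x \<in> orientations \<I>" and acyc: "acyclic (arcs \<I> x)" and "i < j"
    and i_minimal: "\<And>w. w < j \<Longrightarrow> (j, w) \<in> arcs \<I> x \<Longrightarrow> (w, i) \<notin> (arcs \<I> x)\<^sup>+"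
  shows "acyclic (arcs \<I> (redirect \<I> x j i))"
proof -
  let ?r = "arcs \<I> x - {(j, i)}"
  have "(j, i) \<notin> ?r\<^sup>*"
    using no_path_avoiding_arc[OF assms] \<open>i < j\<close> by (simp add: rtrancl_eq_or_trancl)
  moreover have "acyclic ?r"
    using acyclic_subset[OF acyc Diff_subset] .
  ultimately have "acyclic (insert (i, j) ?r)"
    by simp
  then have "acyclic ((insert (i, j) ?r)\<^sup>+)"
    by (simp add: acyclic_def)
  then show ?thesis
    using arcs_redirect_subset by (rule acyclic_subset)
qed

lemma exists_flip_below:
  assumes x: "x \<in> acyclic_orientations \<I>"
    and H0: "H0 \<in> \<I>" "x H0 = j" "Min H0 \<noteq> j"
  obtains y where "y \<in> acyclic_orientations \<I>" "increasing_flip n \<I> y x"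
    "\<And>H. x H \<noteq> j \<Longrightarrow> y H = x H"
proof -
  have xo: "x \<in> orientations \<I>" and acyc: "acyclic (arcs \<I> x)"
    using x by (simp_all add: mem_acyclic_orientations_iff)
  have "j \<in> H0" using orientation_in_hyperedge[OF xo H0(1)] H0(2) by simp
  then have "Min H0 < j"
    using Min_hyperedge_le[OF H0(1)] H0(3) by (simp add: order.strict_iff_order)
  define A where "A = {a. a < j \<and> (j, a) \<in> arcs \<I> x}"
  have "Min H0 \<in> A"
    unfolding A_def using H0 \<open>Min H0 < j\<close> Min_in_hyperedge[OF H0(1)] arcsI[of H0 \<I> "Min H0" x]
    by simp
  moreover have "wf ((arcs \<I> x)\<^sup>+)"
    using finite_arcs[OF xo] acyc by (simp add: finite_acyclic_wf wf_trancl)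
  ultimately obtain i where "i \<in> A" and i_minimal: "\<And>w. (w, i) \<in> (arcs \<I> x)\<^sup>+ \<Longrightarrow> w \<notin> A"
    by (meson wfE_min)
  then have ji: "(j, i) \<in> arcs \<I> x" "i < j" unfolding A_def by simp_all
  have "(i, j) \<notin> arcs \<I> x"
    using ji(1) acyc unfolding acyclic_def by (meson r_into_trancl trancl_into_trancl)
  moreover have "1 \<le> i" "j \<le> n"
    using ji(1) xo hyperedge_range unfolding arcs_def orientations_def by auto
  ultimately have "increasing_flip n \<I> (redirect \<I> x j i) x"
    using increasing_flip_redirect ji by blast
  moreover have "acyclic (arcs \<I> (redirect \<I> x j i))"
    using acyclic_arcs_redirect[OF xo acyc ji(2)] i_minimal unfolding A_def by blast
  then have "redirect \<I> x j i \<in> acyclic_orientations \<I>"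
    using redirect_orientation[OF xo] by (simp add: mem_acyclic_orientations_iff)
  moreover have "redirect \<I> x j i H = x H" if "x H \<noteq> j" for H
    using that unfolding redirect_def by simp
  ultimately show ?thesis using that by blast
qed

lemma exists_cover_fixing:
  assumes "x \<in> acyclic_orientations \<I>" "H0 \<in> \<I>" "x H0 = j" "Min H0 \<noteq> j"
  obtains c where "P_covers n \<I> x c" "\<And>H. x H \<noteq> j \<Longrightarrow> c H = x H"
proof -
  obtain y where y: "y \<in> acyclic_orientations \<I>" "increasing_flip n \<I> y x"
    and y_fixes: "\<And>H. x H \<noteq> j \<Longrightarrow> y H = x H"
    using exists_flip_below[OF assms] by blast
  have "P_le n \<I> y x" "y \<noteq> x"
    using P_le_flip[OF y(1) assms(1) y(2)] y(2) unfolding increasing_flip_def by simp_all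
  then obtain c where c: "P_covers n \<I> x c" "P_le n \<I> y c"
    using exists_cover_above[OF finite_hypergraph] by blast
  have "c H = x H" if "x H \<noteq> j" for H
  proof (rule antisym)
    show "c H \<le> x H"
      using c(1) P_le_pointwise unfolding P_covers_def by blast
    show "x H \<le> c H"
      using P_le_pointwise[OF c(2), of H] y_fixes[OF that] by simp
  qed
  with c(1) show ?thesis using that by blast
qed

lemma join_irreducible_two_valued:
  assumes "P_join_irreducible n \<I> x"
  obtains j H0 where "H0 \<in> \<I>" "x H0 = j" "Min H0 \<noteq> j"
    "\<And>H. H \<in> \<I> \<Longrightarrow> x H = j \<or> x H = Min H"
proof -
  have x: "x \<in> acyclic_orientations \<I>" and unique: "\<exists>!c. P_covers n \<I> x c"
    using assms unfolding P_join_irreducible_def by auto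
  then obtain c where c: "P_covers n \<I> x c" by blast
  then have "c \<noteq> x" "c \<in> acyclic_orientations \<I>" "P_le n \<I> c x"
    unfolding P_covers_def by auto
  have "\<exists>H0\<in>\<I>. x H0 \<noteq> Min H0"
  proof (rule ccontr)
    assume "\<not> (\<exists>H0\<in>\<I>. x H0 \<noteq> Min H0)"
    then have "c H = x H" if "H \<in> \<I>" for H
      using P_le_pointwise[OF \<open>P_le n \<I> c x\<close>, of H] that
        Min_hyperedge_le[OF that, of "c H"] \<open>c \<in> acyclic_orientations \<I>\<close>
      unfolding acyclic_orientations_def orientations_def by force
    then have "c = x"
      using orientations_eqI \<open>c \<in> acyclic_orientations \<I>\<close> x
      unfolding acyclic_orientations_def by blast
    with \<open>c \<noteq> x\<close> show False ..
  qed
  then obtain H0 where H0: "H0 \<in> \<I>" "x H0 \<noteq> Min H0" by blast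
  obtain c1 where c1: "P_covers n \<I> x c1" "\<And>H. x H \<noteq> x H0 \<Longrightarrow> c1 H = x H"
    using exists_cover_fixing[OF x H0(1) refl] H0(2) by metis
  obtain G where G: "c G \<noteq> x G" using \<open>c \<noteq> x\<close> by auto
  have "x H = x H0 \<or> x H = Min H" if H: "H \<in> \<I>" for H
  proof (rule ccontr)
    assume *: "\<not> (x H = x H0 \<or> x H = Min H)"
    then obtain c2 where c2: "P_covers n \<I> x c2" "\<And>H'. x H' \<noteq> x H \<Longrightarrow> c2 H' = x H'"
      using exists_cover_fixing[OF x H refl] by metis
    have "c1 = c" "c2 = c" using unique c c1(1) c2(1) by blast+
    then have "x G = x H0" "x G = x H" using c1(2) c2(2) G by metis+
    with * show False by simp
  qed
  with H0 show ?thesis using that by metis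
qed

lemma lift_orientation_orientation: "lift_orientation \<I> m j \<in> orientations \<I>"
  unfolding orientations_def lift_orientation_def using Min_in_hyperedge by auto

lemma two_valued_eq_lift:
  assumes x: "x \<in> acyclic_orientations \<I>"
    and two_valued: "\<And>H. H \<in> \<I> \<Longrightarrow> x H = j \<or> x H = Min H"
    and H0: "H0 \<in> \<I>" "x H0 = j" "Min H0 \<noteq> j"
    and H0_least: "\<And>H. H \<in> \<I> \<Longrightarrow> x H = j \<Longrightarrow> Min H \<noteq> j \<Longrightarrow> Min H0 \<le> Min H"
  shows "x = lift_orientation \<I> (Min H0) j"
proof (rule orientations_eqI)
  have xo: "x \<in> orientations \<I>" and acyc: "acyclic_orientation \<I> x"
    using x unfolding acyclic_orientations_def by auto
  show "x \<in> orientations \<I>" by fact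
  show "lift_orientation \<I> (Min H0) j \<in> orientations \<I>"
    by (rule lift_orientation_orientation)
  have "j \<in> H0" using orientation_in_hyperedge[OF xo H0(1)] H0(2) by simp
  then have "Min H0 < j"
    using Min_hyperedge_le[OF H0(1)] H0(3) by (simp add: order.strict_iff_order)
  fix H assume H: "H \<in> \<I>"
  show "x H = lift_orientation \<I> (Min H0) j H"
  proof (cases "x H = j")
    case True
    then have "j \<in> H" using orientation_in_hyperedge[OF xo H] by simp
    moreover have "Min H0 \<le> Min H"
      using H0_least[OF H True] \<open>Min H0 < j\<close> by fastforce
    ultimately show ?thesis
      unfolding lift_orientation_def using H True by simp
  next
    case False
    then have xH: "x H = Min H" "Min H \<noteq> j" using two_valued[OF H] by auto
    have "\<not> (j \<in> H \<and> Min H0 \<le> Min H)"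
    proof
      assume "j \<in> H \<and> Min H0 \<le> Min H"
      moreover have "Min H \<in> H0"
        using hyperedge_convex[OF H0(1) Min_in_hyperedge[OF H0(1)] \<open>j \<in> H0\<close>]
          calculation Min_hyperedge_le[OF H] by blast
      ultimately show False
        using acyclic_orientation_no_2_cycle[OF acyc H0(1) H] xH H0(2) by simp
    qed
    then show ?thesis
      unfolding lift_orientation_def using H xH by auto
  qed
qed

end

section \<open>The covers of a lifted orientation\<close>

definition bottom_points :: "nat set set \<Rightarrow> nat \<Rightarrow> nat \<Rightarrow> nat set" where
  "bottom_points \<I> m j = {m..<j} - \<Union>{J - {Min J} | J. J \<in> \<I> \<and> J \<subseteq> {m..<j}}"

locale nontrivial_lift = interval_hg +
  fixes m j :: nat and H0 :: "nat set"
  assumes H0: "H0 \<in> \<I>" "j \<in> H0" "Min H0 = m" "m < j"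
begin

abbreviation lifted :: "nat set \<Rightarrow> nat" where
  "lifted \<equiv> lift_orientation \<I> m j"

abbreviation lowered :: "nat \<Rightarrow> nat set \<Rightarrow> nat" where
  "lowered i \<equiv> redirect \<I> lifted j i"

abbreviation bottoms :: "nat set" where
  "bottoms \<equiv> bottom_points \<I> m j"

abbreviation i_max :: nat where
  "i_max \<equiv> Max bottoms"

lemma m_ge_1: "1 \<le> m"
  using hyperedge_range[OF H0(1) Min_in_hyperedge[OF H0(1)]] H0(3) by simp

lemma j_le_n: "j \<le> n"
  using hyperedge_range[OF H0(1,2)] by simp

lemma in_H0: "m \<le> c \<Longrightarrow> c \<le> j \<Longrightarrow> c \<in> H0"
  using hyperedge_convex[OF H0(1) Min_in_hyperedge[OF H0(1)] H0(2)] H0(3) by simp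

lemma bottom_points_bounds: "i \<in> bottoms \<Longrightarrow> m \<le> i \<and> i < j"
  unfolding bottom_points_def by auto

lemma bottom_point_is_Min:
  "i \<in> bottoms \<Longrightarrow> G \<in> \<I> \<Longrightarrow> G \<subseteq> {m..<j} \<Longrightarrow> i \<in> G \<Longrightarrow> i = Min G"
  unfolding bottom_points_def by blast

lemma bottom_pointI:
  assumes "m \<le> i" "i < j" "\<And>G. G \<in> \<I> \<Longrightarrow> G \<subseteq> {m..<j} \<Longrightarrow> i \<in> G \<Longrightarrow> i = Min G"
  shows "i \<in> bottoms"
  using assms unfolding bottom_points_def by fastforce

lemma m_bottom_point: "m \<in> bottoms"
proof (rule bottom_pointI)
  fix G assume G: "G \<in> \<I>" "G \<subseteq> {m..<j}" "m \<in> G"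
  then show "m = Min G"
    using Min_hyperedge_le[OF G(1,3)] Min_in_hyperedge[OF G(1)] by fastforce
qed (use H0 in simp_all)

lemma finite_bottoms: "finite bottoms"
  by (rule finite_subset[of _ "{m..<j}"]) (auto dest: bottom_points_bounds)

lemma i_max_in_bottoms: "i_max \<in> bottoms"
  using Max_in[OF finite_bottoms] m_bottom_point by blast

lemma le_i_max: "i \<in> bottoms \<Longrightarrow> i \<le> i_max"
  using Max_ge[OF finite_bottoms] by blast

lemma lifted_apply: "H \<in> \<I> \<Longrightarrow> lifted H = (if j \<in> H \<and> m \<le> Min H then j else Min H)"
  unfolding lift_orientation_def by simp

lemma lifted_H0: "lifted H0 = j"
  using H0 by (simp add: lifted_apply)

lemma lift_at_H0: "lift_orientation \<I> m' j' H0 = j \<Longrightarrow> j' = j \<and> m' \<le> m"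
  unfolding lift_orientation_def using H0 by (auto split: if_splits)

lemma lifted_arc_from_j: "m \<le> i \<Longrightarrow> i < j \<Longrightarrow> (j, i) \<in> arcs \<I> lifted"
  using arcsI[OF H0(1) in_H0, of i lifted] lifted_H0 by simp

lemma lowered_apply:
  assumes "m \<le> i" "i < j" "H \<in> \<I>"
  shows "lowered i H = (if j \<in> H \<and> m \<le> Min H then (if Min H \<le> i then i else j) else Min H)"
proof (cases "j \<in> H \<and> m \<le> Min H")
  case True
  then have "lifted H = j" "i \<in> H \<longleftrightarrow> Min H \<le> i"
    using assms mem_hyperedge_iff[OF assms(3)] by (auto simp: lifted_apply)
  with True assms(3) show ?thesis
    unfolding redirect_def by simp
next
  case False
  then have "lifted H = Min H" "Min H \<noteq> j"
    using assms(3) Min_in_hyperedge[OF assms(3)] H0(4) by (auto simp: lifted_apply)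
  with False assms(3) show ?thesis
    unfolding redirect_def by auto
qed

lemma lowered_H0: "m \<le> i \<Longrightarrow> i < j \<Longrightarrow> lowered i H0 = i"
  using lowered_apply[OF _ _ H0(1)] H0 by simp

text \<open>The position of v in the permutation of lift_orientation.\<close>

definition lift_rank :: "nat \<Rightarrow> nat" where
  "lift_rank v = (if v < m then v else if v = j then m else if v < j then v + 1 else v)"

lemma lift_rank_increases:
  assumes "H \<in> \<I>" "b \<in> H" "b \<noteq> lifted H"
  shows "lift_rank (lifted H) < lift_rank b"
proof (cases "j \<in> H \<and> m \<le> Min H")
  case True
  then have "lifted H = j" "m \<le> b" "b \<noteq> j"
    using assms Min_hyperedge_le[OF assms(1,2)] by (auto simp: lifted_apply)
  then show ?thesis using H0(4) unfolding lift_rank_def by auto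
next
  case False
  then have "lifted H = Min H" "Min H < b"
    using assms Min_hyperedge_le[OF assms(1,2)] by (auto simp: lifted_apply)
  moreover have "\<not> (Min H \<le> j \<and> j \<le> b)" if "m \<le> Min H"
    using False that hyperedge_convex[OF assms(1) Min_in_hyperedge[OF assms(1)] assms(2)] by blast
  ultimately show ?thesis using H0(4) unfolding lift_rank_def by auto
qed

lemma lifted_acyclic: "lifted \<in> acyclic_orientations \<I>"
  using lift_orientation_orientation
    acyclic_orientation_if_rank[of \<I> lifted lift_rank, OF lift_rank_increases]
  unfolding acyclic_orientations_def by blast

text \<open>Such a path would end in an arc u -> i with u \<ge> m, since ranks increase along
  paths; the hyperedge of that arc then lies in [m, j) and has minimum u \<noteq> i.\<close>

lemma no_path_to_bottom_point:
  assumes i: "i \<in> bottoms" and w: "w < j" "(j, w) \<in> arcs \<I> lifted"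
  shows "(w, i) \<notin> (arcs \<I> lifted)\<^sup>+"
proof
  have mi: "m \<le> i" "i < j" using bottom_points_bounds[OF i] by auto
  assume "(w, i) \<in> (arcs \<I> lifted)\<^sup>+"
  then obtain u where wu: "(w, u) \<in> (arcs \<I> lifted)\<^sup>*" and ui: "(u, i) \<in> arcs \<I> lifted"
    by (blast dest: tranclD2)
  obtain G where G: "G \<in> \<I>" "lifted G = j" "w \<in> G"
    using w(2) by (rule arcsE)
  have "j \<in> G \<and> m \<le> Min G"
    using G w(1) Min_hyperedge_le[OF G(1,3)] by (auto simp: lifted_apply split: if_splits)
  then have "m < lift_rank w"
    using Min_hyperedge_le[OF G(1,3)] w(1) unfolding lift_rank_def by auto
  also have "lift_rank w \<le> lift_rank u"
    using wu rank_increases_along_arcs[of \<I> lifted lift_rank, OF lift_rank_increases]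
    by (auto simp: rtrancl_eq_or_trancl less_imp_le)
  finally have u: "m \<le> u" "u \<noteq> j"
    unfolding lift_rank_def by (auto split: if_splits)
  obtain K where K: "K \<in> \<I>" "lifted K = u" "i \<in> K" "i \<noteq> u"
    using ui by (rule arcsE)
  then have "lifted K = Min K" "j \<notin> K" "m \<le> Min K"
    using u by (auto simp: lifted_apply split: if_splits)
  moreover have "Min K < j"
    using Min_hyperedge_le[OF K(1,3)] mi(2) by simp
  ultimately have "K \<subseteq> {m..<j}"
    using hyperedge_below_if_Min_below[OF K(1)] Min_hyperedge_le[OF K(1)] by fastforce
  then have "i = Min K" by (rule bottom_point_is_Min[OF i K(1) _ K(3)])
  with K \<open>lifted K = Min K\<close> show False by simp
qed

lemma lowered_acyclic:
  assumes i: "i \<in> bottoms"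
  shows "lowered i \<in> acyclic_orientations \<I>"
proof -
  have "i < j" using bottom_points_bounds[OF i] by simp
  moreover have "acyclic (arcs \<I> lifted)"
    using lifted_acyclic by (simp add: mem_acyclic_orientations_iff)
  ultimately have "acyclic (arcs \<I> (lowered i))"
    using acyclic_arcs_redirect[OF lift_orientation_orientation] no_path_to_bottom_point[OF i]
    by blast
  then show ?thesis
    using redirect_orientation[OF lift_orientation_orientation]
    by (simp add: mem_acyclic_orientations_iff)
qed

lemma bottom_point_if_lowered_acyclic:
  assumes mi: "m \<le> i" "i < j" and acyc: "lowered i \<in> acyclic_orientations \<I>"
  shows "i \<in> bottoms"
proof (rule bottom_pointI[OF mi])
  fix G assume G: "G \<in> \<I>" "G \<subseteq> {m..<j}" "i \<in> G"
  show "i = Min G"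
  proof (rule ccontr)
    assume "i \<noteq> Min G"
    have "Min G \<in> G" using Min_in_hyperedge[OF G(1)] .
    with G(2) have "Min G \<in> H0" "lowered i G = Min G"
      using in_H0 lowered_apply[OF mi G(1)] by auto
    moreover have "acyclic_orientation \<I> (lowered i)"
      using acyc unfolding acyclic_orientations_def by blast
    ultimately show False
      using acyclic_orientation_no_2_cycle[of \<I> "lowered i" H0 G] H0(1) G lowered_H0[OF mi]
        \<open>i \<noteq> Min G\<close> by simp
  qed
qed

lemma lowered_flip_lifted:
  assumes "m \<le> i" "i < j"
  shows "increasing_flip n \<I> (lowered i) lifted"
proof (rule increasing_flip_redirect)
  show "(j, i) \<in> arcs \<I> lifted" using lifted_arc_from_j[OF assms] .
  show "(i, j) \<notin> arcs \<I> lifted"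
  proof
    assume "(i, j) \<in> arcs \<I> lifted"
    then obtain G where "G \<in> \<I>" "lifted G = i" "j \<in> G"
      by (rule arcsE)
    with assms show False
      using Min_hyperedge_le[of G j] by (auto simp: lifted_apply split: if_splits)
  qed
qed (use assms m_ge_1 j_le_n in auto)

lemma flip_to_lifted_is_lowered:
  assumes c: "c \<in> orientations \<I>" and flip: "increasing_flip n \<I> c lifted"
  obtains i where "m \<le> i" "i < j" "c = lowered i"
proof -
  obtain i k where "c \<noteq> lifted" "i < k"
    and changed: "\<And>H. H \<in> \<I> \<Longrightarrow> c H \<noteq> lifted H \<Longrightarrow> c H = i \<and> lifted H = k"
    and linked: "\<And>H. H \<in> \<I> \<Longrightarrow> {i, k} \<subseteq> H \<Longrightarrow> c H = i \<longleftrightarrow> lifted H = k"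
    using flip unfolding increasing_flip_def by metis
  then obtain H where H: "H \<in> \<I>" "c H \<noteq> lifted H"
    using orientations_eqI[OF c lift_orientation_orientation] by blast
  then have "c H = i" "lifted H = k" using changed by auto
  then have "i \<in> H" using orientation_in_hyperedge[OF c H(1)] by simp
  then have "Min H \<le> i" using Min_hyperedge_le[OF H(1)] by blast
  then have "j \<in> H \<and> m \<le> Min H" "k = j"
    using \<open>lifted H = k\<close> \<open>i < k\<close> H(1) by (auto simp: lifted_apply split: if_splits)
  then have mi: "m \<le> i" "i < j" using \<open>Min H \<le> i\<close> \<open>i < k\<close> by auto
  have "c = lowered i"
  proof (rule orientations_eqI[OF c redirect_orientation[OF lift_orientation_orientation]])
    fix G assume G: "G \<in> \<I>"
    show "c G = lowered i G"
    proof (cases "j \<in> G \<and> m \<le> Min G \<and> Min G \<le> i")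
      case True
      then have "i \<in> G"
        using hyperedge_convex[OF G Min_in_hyperedge[OF G], of j i] mi by simp
      with True G linked[OF G] \<open>k = j\<close> have "c G = i"
        by (simp add: lifted_apply)
      with True show ?thesis using lowered_apply[OF mi G] by simp
    next
      case False
      have "c G = lifted G"
      proof (rule ccontr)
        assume "c G \<noteq> lifted G"
        then have "c G = i" "lifted G = j" using changed[OF G] \<open>k = j\<close> by auto
        moreover from this have "Min G \<le> i"
          using c G Min_hyperedge_le[OF G] unfolding orientations_def by auto
        ultimately show False
          using False G mi by (auto simp: lifted_apply split: if_splits)
      qed
      with False G show ?thesis
        using lowered_apply[OF mi G] by (auto simp: lifted_apply)
    qed
  qed
  with mi show ?thesis using that by blast
qed

lemma cover_of_lifted_is_lowered:
  assumes "P_covers n \<I> lifted c"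
  obtains i where "i \<in> bottoms" "c = lowered i"
proof -
  have c: "c \<in> acyclic_orientations \<I>" "increasing_flip n \<I> c lifted"
    using P_covers_flip[OF assms] by auto
  then obtain i where "m \<le> i" "i < j" "c = lowered i"
    using flip_to_lifted_is_lowered unfolding acyclic_orientations_def by blast
  with c(1) show ?thesis
    using bottom_point_if_lowered_acyclic that by blast
qed

lemma lowered_le_imp_le:
  assumes "m \<le> i" "i < j" "m \<le> k" "k < j" "\<And>H. lowered i H \<le> lowered k H"
  shows "i \<le> k"
  using assms(5)[of H0] lowered_H0 assms(1-4) by simp

lemma lowered_covers:
  assumes k: "k \<in> bottoms"
    and k_maximal: "\<And>k'. k' \<in> bottoms \<Longrightarrow> (\<And>H. lowered k H \<le> lowered k' H) \<Longrightarrow> k' = k"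
  shows "P_covers n \<I> lifted (lowered k)"
  unfolding P_covers_def
proof (intro conjI)
  have mk: "m \<le> k" "k < j" using bottom_points_bounds[OF k] by auto
  show k_acyc: "lowered k \<in> acyclic_orientations \<I>" using lowered_acyclic[OF k] .
  show "lifted \<in> acyclic_orientations \<I>" using lifted_acyclic .
  show "P_le n \<I> (lowered k) lifted"
    using P_le_flip[OF k_acyc lifted_acyclic lowered_flip_lifted[OF mk]] .
  show "lowered k \<noteq> lifted"
    using lowered_flip_lifted[OF mk] unfolding increasing_flip_def by blast
  show "\<not> (\<exists>z\<in>acyclic_orientations \<I>.
      P_le n \<I> (lowered k) z \<and> P_le n \<I> z lifted \<and> z \<noteq> lowered k \<and> z \<noteq> lifted)"
  proof (intro notI, elim bexE conjE)
    fix z assume z: "z \<in> acyclic_orientations \<I>" "P_le n \<I> (lowered k) z" "P_le n \<I> z lifted"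
      "z \<noteq> lowered k" "z \<noteq> lifted"
    obtain w where w: "w \<in> acyclic_orientations \<I>" "P_le n \<I> z w" "increasing_flip n \<I> w lifted"
      using P_le_last_flip[OF z(3,5)] .
    then obtain k' where k': "m \<le> k'" "k' < j" "w = lowered k'"
      using flip_to_lifted_is_lowered unfolding acyclic_orientations_def by blast
    then have "k' \<in> bottoms" using bottom_point_if_lowered_acyclic w(1) by blast
    moreover have "lowered k H \<le> z H" "z H \<le> lowered k' H" for H
      using P_le_pointwise[OF z(2)] P_le_pointwise[OF w(2)] k'(3) by auto
    ultimately have "k' = k" using k_maximal order_trans by meson
    with \<open>lowered k _ \<le> z _\<close> \<open>z _ \<le> lowered k' _\<close> have "z = lowered k"
      by (auto intro: antisym)
    with z(4) show False ..
  qed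
qed

lemma lowered_i_max_covers: "P_covers n \<I> lifted (lowered i_max)"
proof (rule lowered_covers[OF i_max_in_bottoms])
  fix k assume k: "k \<in> bottoms" "\<And>H. lowered i_max H \<le> lowered k H"
  then have "i_max \<le> k"
    using lowered_le_imp_le bottom_points_bounds i_max_in_bottoms by blast
  then show "k = i_max" using le_i_max[OF k(1)] by simp
qed

lemma exists_lowered_cover_below:
  assumes H1: "H1 \<in> \<I>" "j \<in> H1" "m < Min H1"
  obtains r where "r \<in> bottoms" "r < Min H1" "P_covers n \<I> lifted (lowered r)"
proof -
  define r where "r = Max {k \<in> bottoms. k < Min H1}"
  have fin: "finite {k \<in> bottoms. k < Min H1}"
    by (rule finite_subset[of _ "{..<Min H1}"]) auto
  have "m \<in> {k \<in> bottoms. k < Min H1}"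
    using m_bottom_point H1(3) by simp
  then have r: "r \<in> bottoms" "r < Min H1"
    using Max_in[OF fin] unfolding r_def by blast+
  have r_max: "k \<le> r" if "k \<in> bottoms" "k < Min H1" for k
    using Max_ge[OF fin] that unfolding r_def by blast
  have "P_covers n \<I> lifted (lowered r)"
  proof (rule lowered_covers[OF r(1)])
    fix k assume k: "k \<in> bottoms" "\<And>H. lowered r H \<le> lowered k H"
    have mk: "m \<le> k" "k < j" "m \<le> r" "r < j"
      using bottom_points_bounds k(1) r(1) by auto
    have "r \<le> k" using lowered_le_imp_le[OF mk(3,4,1,2) k(2)] .
    have "lowered r H1 = j" "lowered k H1 = (if Min H1 \<le> k then k else j)"
      using lowered_apply[OF _ _ H1(1)] mk H1 r(2) by auto
    then have "k < Min H1" using k(2)[of H1] mk by (auto split: if_splits)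
    then show "k = r" using r_max[OF k(1)] \<open>r \<le> k\<close> by simp
  qed
  with r show ?thesis using that by blast
qed

lemma lowered_flip_lowered:
  assumes no_gap: "\<not> (\<exists>H\<in>\<I>. j \<in> H \<and> m < Min H \<and> Min H \<le> i_max)"
    and i: "i \<in> bottoms" "i < i_max"
  shows "increasing_flip n \<I> (lowered i) (lowered i_max)"
proof -
  have mi: "m \<le> i" "i < j" and mt: "m \<le> i_max" "i_max < j"
    using bottom_points_bounds i(1) i_max_in_bottoms by auto
  have lowered_eqs:
    "lowered i H = (if j \<in> H \<and> Min H = m then i else if j \<in> H \<and> m \<le> Min H then j else Min H)"
    "lowered i_max H =
      (if j \<in> H \<and> Min H = m then i_max else if j \<in> H \<and> m \<le> Min H then j else Min H)"
    if "H \<in> \<I>" for H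
    using lowered_apply[OF mi that] lowered_apply[OF mt that] no_gap that mi mt i(2) by auto
  show ?thesis
  proof (rule increasing_flipI)
    show "1 \<le> i" "i < i_max" "i_max \<le> n"
      using m_ge_1 mi i(2) mt j_le_n by auto
    show "lowered i \<noteq> lowered i_max"
      using lowered_H0[OF mi] lowered_H0[OF mt] i(2) by (metis less_irrefl)
    fix H assume H: "H \<in> \<I>"
    show "lowered i H \<noteq> lowered i_max H \<Longrightarrow> lowered i H = i \<and> lowered i_max H = i_max"
      using lowered_eqs[OF H] by (auto split: if_splits)
    assume "i \<in> H" "i_max \<in> H"
    have "Min H \<noteq> i" if "\<not> (j \<in> H \<and> m \<le> Min H)"
    proof
      assume "Min H = i"
      with that mi have "H \<subseteq> {m..<j}"
        using hyperedge_below_if_Min_below[OF H] Min_hyperedge_le[OF H] by fastforce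
      with \<open>Min H = i\<close> \<open>i_max \<in> H\<close> show False
        using bottom_point_is_Min[OF i_max_in_bottoms H] i(2) by simp
    qed
    then show "lowered i H = i \<longleftrightarrow> lowered i_max H = i_max"
      using lowered_eqs[OF H] Min_hyperedge_le[OF H \<open>i \<in> H\<close>] no_gap H i(2) mi mt by auto
  qed
qed

theorem lifted_join_irreducible_iff:
  "P_join_irreducible n \<I> lifted \<longleftrightarrow> \<not> (\<exists>H\<in>\<I>. j \<in> H \<and> m < Min H \<and> Min H \<le> i_max)"
proof
  assume "P_join_irreducible n \<I> lifted"
  then have unique: "\<exists>!c. P_covers n \<I> lifted c"
    unfolding P_join_irreducible_def by blast
  show "\<not> (\<exists>H\<in>\<I>. j \<in> H \<and> m < Min H \<and> Min H \<le> i_max)"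
  proof (intro notI, elim bexE conjE)
    fix H1 assume H1: "H1 \<in> \<I>" "j \<in> H1" "m < Min H1" "Min H1 \<le> i_max"
    obtain r where r: "r \<in> bottoms" "r < Min H1" "P_covers n \<I> lifted (lowered r)"
      using exists_lowered_cover_below[OF H1(1-3)] .
    have "lowered r H0 \<noteq> lowered i_max H0"
      using lowered_H0 bottom_points_bounds r(1,2) i_max_in_bottoms H1(4) by simp
    moreover have "lowered r = lowered i_max"
      using unique r(3) lowered_i_max_covers by blast
    ultimately show False by simp
  qed
next
  assume no_gap: "\<not> (\<exists>H\<in>\<I>. j \<in> H \<and> m < Min H \<and> Min H \<le> i_max)"
  have "c = lowered i_max" if c: "P_covers n \<I> lifted c" for c
  proof (rule ccontr)
    assume "c \<noteq> lowered i_max"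
    obtain i where i: "i \<in> bottoms" "c = lowered i"
      using cover_of_lifted_is_lowered[OF c] .
    with \<open>c \<noteq> lowered i_max\<close> have "i < i_max"
      using le_i_max[OF i(1)] by fastforce
    then have "P_le n \<I> c (lowered i_max)"
      using P_le_flip lowered_flip_lowered[OF no_gap i(1)] lowered_acyclic i i_max_in_bottoms
      by simp
    moreover have "P_le n \<I> (lowered i_max) lifted" "lowered i_max \<noteq> lifted"
      "lowered i_max \<in> acyclic_orientations \<I>"
      using lowered_i_max_covers unfolding P_covers_def by auto
    ultimately show False
      using c \<open>c \<noteq> lowered i_max\<close> unfolding P_covers_def by blast
  qed
  then show "P_join_irreducible n \<I> lifted"
    unfolding P_join_irreducible_def
    using lifted_acyclic lowered_i_max_covers P_covers_not_least by blast
qed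

end

section \<open>Join irreducible orientations\<close>

lemma (in interval_hg) join_irreducible_eq_lift:
  assumes "P_join_irreducible n \<I> x"
  obtains m j H0 where "nontrivial_lift n \<I> m j H0" "x = lift_orientation \<I> m j"
proof -
  have x: "x \<in> acyclic_orientations \<I>"
    using assms unfolding P_join_irreducible_def by blast
  obtain j H1 where H1: "H1 \<in> \<I>" "x H1 = j" "Min H1 \<noteq> j"
    and two_valued: "\<And>H. H \<in> \<I> \<Longrightarrow> x H = j \<or> x H = Min H"
    using join_irreducible_two_valued[OF assms] by metis
  define S where "S = {H \<in> \<I>. x H = j \<and> Min H \<noteq> j}"
  have "finite (Min ` S)" "H1 \<in> S"
    unfolding S_def using finite_hypergraph H1 by auto
  then obtain H0 where H0: "H0 \<in> S" "Min H0 = Min (Min ` S)"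
    using Min_in[of "Min ` S"] by fastforce
  have H0_least: "Min H0 \<le> Min H" if "H \<in> \<I>" "x H = j" "Min H \<noteq> j" for H
    using that H0(2) \<open>finite (Min ` S)\<close> unfolding S_def by simp
  have H0': "H0 \<in> \<I>" "x H0 = j" "Min H0 \<noteq> j"
    using H0(1) unfolding S_def by auto
  have "j \<in> H0"
    using x orientation_in_hyperedge[OF _ H0'(1)] H0'(2) unfolding acyclic_orientations_def by blast
  then have "Min H0 < j"
    using Min_hyperedge_le[OF H0'(1)] H0'(3) by (simp add: order.strict_iff_order)
  with H0' \<open>j \<in> H0\<close> have "nontrivial_lift n \<I> (Min H0) j H0"
    by unfold_locales simp_all
  moreover have "x = lift_orientation \<I> (Min H0) j"
    using two_valued_eq_lift[OF x two_valued H0' H0_least] by blast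
  ultimately show ?thesis using that by blast
qed

lemma A_orient_eq_lift: "A_orient \<I> i j = lift_orientation \<I> (mu \<I> i j) j"
  unfolding A_orient_def lift_orientation_def by simp

lemma IJ_eq: "IJ n \<I> = {(i, j). 1 \<le> i \<and> i < j \<and> j \<le> n \<and> (\<exists>I\<in>\<I>. {i, j} \<subseteq> I) \<and>
     i = Max (bottom_points \<I> (mu \<I> i j) j)}"
  unfolding IJ_def bottom_points_def by simp

locale closed_interval_hg = interval_hg +
  assumes closed: "closed_under_intersection \<I>"
begin

lemma J_set_in_hypergraph:
  assumes "H \<in> \<I>" "{i, j} \<subseteq> H"
  shows "J_set \<I> i j \<in> \<I>"
proof -
  have "\<Inter>F \<in> \<I>" if "finite F" "F \<noteq> {}" "F \<subseteq> {H \<in> \<I>. i \<in> H}" for F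
    using that
  proof (induction F rule: finite_ne_induct)
    case (insert G F)
    then have "G \<inter> \<Inter>F \<noteq> {}" by blast
    with insert show ?case using closed unfolding closed_under_intersection_def by auto
  qed simp
  moreover have "finite {H \<in> \<I>. {i, j} \<subseteq> H}"
    using finite_hypergraph by simp
  ultimately show ?thesis
    unfolding J_set_def using assms by blast
qed

lemma IJ_nontrivial_lift:
  assumes "(i, j) \<in> IJ n \<I>"
  shows "nontrivial_lift n \<I> (mu \<I> i j) j (J_set \<I> i j)"
    and "i = Max (bottom_points \<I> (mu \<I> i j) j)"
    and "\<not> (\<exists>H\<in>\<I>. j \<in> H \<and> mu \<I> i j < Min H \<and> Min H \<le> i)"
proof -
  let ?K = "J_set \<I> i j"
  obtain H where ij: "i < j" "H \<in> \<I>" "{i, j} \<subseteq> H"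
    and i: "i = Max (bottom_points \<I> (mu \<I> i j) j)"
    using assms unfolding IJ_eq by blast
  have K: "?K \<in> \<I>" "{i, j} \<subseteq> ?K"
    using J_set_in_hypergraph[OF ij(2,3)] unfolding J_set_def by auto
  have mu: "mu \<I> i j = Min ?K" unfolding mu_def ..
  then have "mu \<I> i j < j"
    using Min_hyperedge_le[OF K(1)] K(2) ij(1) by fastforce
  with K mu show "nontrivial_lift n \<I> (mu \<I> i j) j ?K"
    by unfold_locales simp_all
  show "i = Max (bottom_points \<I> (mu \<I> i j) j)" by (fact i)
  show "\<not> (\<exists>H\<in>\<I>. j \<in> H \<and> mu \<I> i j < Min H \<and> Min H \<le> i)"
  proof (intro notI, elim bexE conjE)
    fix G assume G: "G \<in> \<I>" "j \<in> G" "mu \<I> i j < Min G" "Min G \<le> i"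
    then have "i \<in> G"
      using hyperedge_convex[OF G(1) Min_in_hyperedge[OF G(1)] G(2)] ij(1) by simp
    with G have "?K \<subseteq> G" unfolding J_set_def by blast
    then have "Min G \<le> Min ?K"
      using Min_hyperedge_le[OF G(1)] Min_in_hyperedge[OF K(1)] by blast
    with G(3) mu show False by simp
  qed
qed

lemma A_orient_join_irreducible:
  assumes "(i, j) \<in> IJ n \<I>"
  shows "P_join_irreducible n \<I> (A_orient \<I> i j)"
  using nontrivial_lift.lifted_join_irreducible_iff[OF IJ_nontrivial_lift(1)[OF assms]]
    IJ_nontrivial_lift(2,3)[OF assms] by (simp add: A_orient_eq_lift)

lemma IJ_lift_eq_imp:
  assumes "(i, j) \<in> IJ n \<I>" "(i', j') \<in> IJ n \<I>"
    and "lift_orientation \<I> (mu \<I> i j) j = lift_orientation \<I> (mu \<I> i' j') j'"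
  shows "j' = j \<and> mu \<I> i' j' \<le> mu \<I> i j"
proof -
  interpret nontrivial_lift n \<I> "mu \<I> i j" j "J_set \<I> i j"
    by (rule IJ_nontrivial_lift(1)[OF assms(1)])
  show ?thesis using lift_at_H0 lifted_H0 assms(3) by simp
qed

lemma inj_on_A_orient: "inj_on (\<lambda>(i, j). A_orient \<I> i j) (IJ n \<I>)"
proof (rule inj_onI, clarify)
  fix i j i' j'
  assume ij: "(i, j) \<in> IJ n \<I>" and ij': "(i', j') \<in> IJ n \<I>"
    and "A_orient \<I> i j = A_orient \<I> i' j'"
  then have "lift_orientation \<I> (mu \<I> i j) j = lift_orientation \<I> (mu \<I> i' j') j'"
    by (simp add: A_orient_eq_lift)
  then have "j = j'" "mu \<I> i j = mu \<I> i' j'"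
    using IJ_lift_eq_imp[OF ij ij'] IJ_lift_eq_imp[OF ij' ij] by auto
  then show "i = i' \<and> j = j'"
    using IJ_nontrivial_lift(2)[OF ij] IJ_nontrivial_lift(2)[OF ij'] by simp
qed

lemma join_irreducible_in_image:
  assumes "P_join_irreducible n \<I> x"
  shows "x \<in> (\<lambda>(i, j). A_orient \<I> i j) ` IJ n \<I>"
proof -
  obtain m j H0 where lift: "nontrivial_lift n \<I> m j H0" and x: "x = lift_orientation \<I> m j"
    using join_irreducible_eq_lift[OF assms] .
  interpret nontrivial_lift n \<I> m j H0 by (fact lift)
  have no_gap: "\<not> (\<exists>H\<in>\<I>. j \<in> H \<and> m < Min H \<and> Min H \<le> i_max)"
    using lifted_join_irreducible_iff assms x by simp
  have mi: "m \<le> i_max" "i_max < j"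
    using bottom_points_bounds i_max_in_bottoms by auto
  let ?K = "J_set \<I> i_max j"
  have "{i_max, j} \<subseteq> H0" using in_H0 mi H0(2) by simp
  then have K: "?K \<in> \<I>" "{i_max, j} \<subseteq> ?K" "?K \<subseteq> H0"
    using J_set_in_hypergraph[OF H0(1)] H0(1) unfolding J_set_def by auto
  then have "m \<le> Min ?K" "Min ?K \<le> i_max"
    using Min_hyperedge_le[OF H0(1)] Min_in_hyperedge[OF K(1)] Min_hyperedge_le[OF K(1)] H0(3)
    by auto
  with no_gap K have mu: "mu \<I> i_max j = m"
    unfolding mu_def by fastforce
  have "(i_max, j) \<in> IJ n \<I>"
    unfolding IJ_eq using m_ge_1 mi j_le_n K(1,2) mu by auto
  moreover have "x = A_orient \<I> i_max j"
    using x mu by (simp add: A_orient_eq_lift)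
  ultimately show ?thesis by force
qed

theorem bij_betw_A_orient_join_irreducibles:
  "bij_betw (\<lambda>(i, j). A_orient \<I> i j) (IJ n \<I>)
     {Or \<in> acyclic_orientations \<I>. P_join_irreducible n \<I> Or}"
  unfolding bij_betw_def
proof
  show "inj_on (\<lambda>(i, j). A_orient \<I> i j) (IJ n \<I>)" by (rule inj_on_A_orient)
  show "(\<lambda>(i, j). A_orient \<I> i j) ` IJ n \<I> =
      {Or \<in> acyclic_orientations \<I>. P_join_irreducible n \<I> Or}"
  proof -
    have "P_join_irreducible n \<I> x \<Longrightarrow> x \<in> acyclic_orientations \<I>" for x
      unfolding P_join_irreducible_def by blast
    then show ?thesis
      using A_orient_join_irreducible join_irreducible_in_image by auto
  qed
qed

end

theorem proposition6p21:
  fixes n :: nat and \<I> :: "nat set set"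
  assumes "interval_hypergraph n \<I>"
    and "closed_under_intersection \<I>"
  shows "bij_betw (\<lambda>(i, j). A_orient \<I> i j) (IJ n \<I>)
           {Or \<in> acyclic_orientations \<I>. P_join_irreducible n \<I> Or}"
proof -
  interpret closed_interval_hg n \<I>
    using assms by unfold_locales
  show ?thesis by (rule bij_betw_A_orient_join_irreducibles)
qed

end
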